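(* Let $i\geq1$ and $j\ge0$. The map $\varphi_i$ carries $M_i(j)$ isomorphically onto $N_{i-1}(\lfloor j/p\rfloor)$.
   Context: Let $p$ be an odd prime. In the mod $p$ dual Steenrod algebra let $\zeta_n,\overline{\tau}_n$ be the conjugates of Milnor's $\xi_n,\tau_n$ ($\zeta_0=1$). For $n\ge0$ let $(A/\!/E(n))_*=\mathbb{F}_p[\zeta_1,\zeta_2,\ldots]\otimes E(\overline{\tau}_{n+1},\overline{\tau}_{n+2},\ldots)$, a comodule over $E(n)_*=E(\overline{\tau}_0,\ldots,\overline{\tau}_n)$. Weight: $\mathrm{wt}(\zeta_k)=\mathrm{wt}(\overline{\tau}_k)=p^k$, additive on products of monomials. $M_i(j)$ is the span of the monomials of $(A/\!/E(i))_*$ of weight exactly $pj$; $N_{i-1}(m)$ is the span of the monomials of $(A/\!/E(i-1))_*$ of weight $\le pm$. $\varphi_i\colon(A/\!/E(i))_*\to(A/\!/E(i-1))_*$ is the algebra map with $\zeta_k\mapsto\zeta_{k-1}$ ($k\ge1$) and $\overline{\tau}_j\mapsto\overline{\tau}_{j-1}$ ($j\ge i+1$); it is a map of ungraded $E(i)_*$-comodules. *)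

theory Defs
  imports Main "HOL-Computational_Algebra.Primes"
begin

text \<open>A monomial of the dual Steenrod algebra is encoded as a pair (a, S):
  a k is the exponent of zeta_k (k \<ge> 1; a 0 = 0 since zeta_0 = 1),
  S is the finite set of indices s of the factors taubar_s (in increasing order).\<close>

type_synonym monom = "(nat \<Rightarrow> nat) \<times> nat set"

text \<open>Monomials of (A//E(n))_*: finitely many zeta's, taubar_s only for s \<ge> n+1.\<close>
definition monoms :: "nat \<Rightarrow> monom set" where
  "monoms n = {(a, S). a 0 = 0 \<and> finite {k. a k \<noteq> 0} \<and> finite S \<and> (\<forall>s\<in>S. n < s)}"

definition wt :: "nat \<Rightarrow> monom \<Rightarrow> nat" where
  "wt p m = (\<Sum>k\<in>{k. fst m k \<noteq> 0}. fst m k * p ^ k) + (\<Sum>s\<in>snd m. p ^ s)"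

definition AE :: "nat \<Rightarrow> (monom \<Rightarrow> 'a::field) set" where
  "AE n = {v. finite {m. v m \<noteq> 0} \<and> (\<forall>m. v m \<noteq> 0 \<longrightarrow> m \<in> monoms n)}"

definition Msp :: "nat \<Rightarrow> nat \<Rightarrow> nat \<Rightarrow> (monom \<Rightarrow> 'a::field) set" where
  "Msp p i j = {v \<in> AE i. \<forall>m. v m \<noteq> 0 \<longrightarrow> wt p m = p * j}"

text \<open>N_{i-1}(m): span of monomials of (A//E(i-1))_* of weight at most p*m (argument n = i-1).\<close>
definition Nsp :: "nat \<Rightarrow> nat \<Rightarrow> nat \<Rightarrow> (monom \<Rightarrow> 'a::field) set" where
  "Nsp p n mm = {v \<in> AE n. \<forall>m. v m \<noteq> 0 \<longrightarrow> wt p m \<le> p * mm}"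

text \<open>Effect of phi on monomials: zeta_k \<mapsto> zeta_{k-1} (zeta_0 = 1), taubar_s \<mapsto> taubar_{s-1}.
  Since the shift preserves the order of the taubar factors, no signs arise.\<close>
definition phi_mono :: "monom \<Rightarrow> monom" where
  "phi_mono m = ((\<lambda>k. if k = 0 then 0 else fst m (Suc k)), (\<lambda>s. s - 1) ` snd m)"

definition phi :: "(monom \<Rightarrow> 'a::field) \<Rightarrow> (monom \<Rightarrow> 'a)" where
  "phi v = (\<lambda>m'. \<Sum>m\<in>{m. v m \<noteq> 0 \<and> phi_mono m = m'}. v m)"

end

theory Submission
  imports Defs
begin

(* Every generator of (A//E(n))_* has index at least 1, so a monomial m with zeta_1-exponent a_1
   has weight wt m = p (a_1 + wt (phi_i m)): phi_i forgets zeta_1 and lowers every other index by one.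
   Hence a monomial of weight p j in (A//E(i))_* goes to one of weight j - a_1 <= j, which, being
   itself divisible by p, is at most p floor(j/p); conversely a_1 = j - wt m' recovers the unique
   preimage of m'. So phi_i restricts to a bijection between the monomial bases of M_i(j) and
   N_{i-1}(floor(j/p)), and phi_i is the linear extension of that bijection. *)

definition pushforward :: "('b \<Rightarrow> 'c) \<Rightarrow> ('b \<Rightarrow> 'a::comm_monoid_add) \<Rightarrow> 'c \<Rightarrow> 'a" where
  "pushforward f v = (\<lambda>y. \<Sum>x\<in>{x. v x \<noteq> 0 \<and> f x = y}. v x)"

definition finsupp_on :: "'b set \<Rightarrow> ('b \<Rightarrow> 'a::zero) set" where
  "finsupp_on D = {v. finite {x. v x \<noteq> 0} \<and> {x. v x \<noteq> 0} \<subseteq> D}"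

lemma pushforward_inj_on:
  assumes "inj_on f D" and "{x. v x \<noteq> 0} \<subseteq> D"
  shows "pushforward f v y = (if y \<in> f ` D then v (inv_into D f y) else 0)"
proof (cases "y \<in> f ` D")
  case True
  then obtain x where x: "x \<in> D" "y = f x" by blast
  then have "{x'. v x' \<noteq> 0 \<and> f x' = y} = (if v x = 0 then {} else {x})"
    using assms by (auto simp: inj_on_def)
  then show ?thesis
    using x assms(1) by (simp add: pushforward_def)
next
  case False
  then have "{x. v x \<noteq> 0 \<and> f x = y} = {}"
    using assms(2) by blast
  then show ?thesis
    using False by (simp only: pushforward_def if_False sum.empty)
qed

lemma bij_betw_pushforward:
  fixes f :: "'b \<Rightarrow> 'c"
  assumes "bij_betw f D E"
  shows "bij_betw (pushforward f) (finsupp_on D) (finsupp_on E :: ('c \<Rightarrow> 'a::comm_monoid_add) set)"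
proof -
  have inj: "inj_on f D" and E: "f ` D = E"
    using assms by (auto simp: bij_betw_def)
  have push: "pushforward f v = (\<lambda>y. if y \<in> E then v (inv_into D f y) else 0)"
    if "v \<in> finsupp_on D" for v :: "'b \<Rightarrow> 'a"
    using that pushforward_inj_on[OF inj] E by (auto simp: finsupp_on_def)
  define g :: "('c \<Rightarrow> 'a) \<Rightarrow> 'b \<Rightarrow> 'a" where "g w = (\<lambda>x. if x \<in> D then w (f x) else 0)" for w
  have g: "g w \<in> finsupp_on D" if "w \<in> finsupp_on E" for w
  proof -
    have "{x. g w x \<noteq> 0} = f -` {y. w y \<noteq> 0} \<inter> D"
      by (auto simp: g_def)
    then show ?thesis
      using that finite_vimage_IntI[OF _ inj, of "{y. w y \<noteq> 0}"] by (simp add: finsupp_on_def)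
  qed
  have push_finsupp: "pushforward f v \<in> finsupp_on E" if v: "v \<in> finsupp_on D" for v :: "'b \<Rightarrow> 'a"
  proof -
    have "{y. pushforward f v y \<noteq> 0} \<subseteq> f ` {x. v x \<noteq> 0}"
    proof
      fix y assume "y \<in> {y. pushforward f v y \<noteq> 0}"
      then have "y \<in> E" and "v (inv_into D f y) \<noteq> 0"
        by (auto simp: push[OF v] split: if_splits)
      then show "y \<in> f ` {x. v x \<noteq> 0}"
        using E f_inv_into_f[of y f D] by (metis (mono_tags) image_eqI mem_Collect_eq)
    qed
    then show ?thesis
      using v finite_subset by (auto simp: finsupp_on_def push[OF v] split: if_splits)
  qed
  have g_push: "g (pushforward f v) = v" if "v \<in> finsupp_on D" for v :: "'b \<Rightarrow> 'a"
    using that inj by (auto simp: push g_def finsupp_on_def E[symmetric] fun_eq_iff)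
  have push_g: "pushforward f (g w) = w" if "w \<in> finsupp_on E" for w :: "'c \<Rightarrow> 'a"
    using that g[OF that] by (auto simp: push g_def finsupp_on_def E[symmetric] f_inv_into_f inv_into_into fun_eq_iff)
  show ?thesis
    by (rule bij_betw_byWitness[where f' = g]) (use g_push push_g push_finsupp g in blast)+
qed

lemma pushforward_add:
  assumes "inj_on f D" and "{x. u x \<noteq> 0} \<subseteq> D" and "{x. v x \<noteq> 0} \<subseteq> D"
  shows "pushforward f (\<lambda>x. u x + v x) = (\<lambda>y. pushforward f u y + pushforward f v y)"
proof -
  have "{x. u x + v x \<noteq> 0} \<subseteq> {x. u x \<noteq> 0} \<union> {x. v x \<noteq> 0}"
    by auto
  then have sum_supp: "{x. u x + v x \<noteq> 0} \<subseteq> D"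
    using assms(2,3) by blast
  show ?thesis
    unfolding pushforward_inj_on[OF assms(1) sum_supp] pushforward_inj_on[OF assms(1,2)]
      pushforward_inj_on[OF assms(1,3)]
    by (simp add: fun_eq_iff)
qed

lemma pushforward_scale:
  fixes v :: "'b \<Rightarrow> 'a::semiring_0"
  assumes "inj_on f D" and "{x. v x \<noteq> 0} \<subseteq> D"
  shows "pushforward f (\<lambda>x. c * v x) = (\<lambda>y. c * pushforward f v y)"
proof -
  have scaled_supp: "{x. c * v x \<noteq> 0} \<subseteq> D"
    using assms(2) by auto
  show ?thesis
    unfolding pushforward_inj_on[OF assms(1) scaled_supp] pushforward_inj_on[OF assms]
    by (simp add: fun_eq_iff)
qed

lemma phi_eq_pushforward: "phi = pushforward phi_mono"
  by (simp add: fun_eq_iff phi_def pushforward_def)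

lemma weight_sum_shift:
  fixes a :: "nat \<Rightarrow> nat"
  assumes "a 0 = 0" and "finite {k. a k \<noteq> 0}"
  defines "b \<equiv> \<lambda>k. if k = 0 then 0 else a (Suc k)"
  shows "(\<Sum>k | a k \<noteq> 0. a k * p ^ k) = a 1 * p + p * (\<Sum>k | b k \<noteq> 0. b k * p ^ k)"
proof -
  have sum_below: "(\<Sum>k | c k \<noteq> 0. c k * p ^ k) = (\<Sum>k<N. c k * p ^ k)"
    if "{k. c k \<noteq> 0} \<subseteq> {..<N}" for c :: "nat \<Rightarrow> nat" and N
    by (rule sum.mono_neutral_left) (use that in auto)
  obtain N where N: "{k. a k \<noteq> 0} \<subseteq> {..<N}"
    using assms(2) finite_nat_set_iff_bounded by auto
  have "(\<Sum>k | a k \<noteq> 0. a k * p ^ k) = (\<Sum>k<Suc (Suc N). a k * p ^ k)"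
    using N by (intro sum_below) auto
  also have "\<dots> = a 1 * p + p * (\<Sum>k<N. a (Suc (Suc k)) * p ^ Suc k)"
    by (simp only: sum.lessThan_Suc_shift) (simp add: assms(1) sum_distrib_left ac_simps)
  also have "(\<Sum>k<N. a (Suc (Suc k)) * p ^ Suc k) = (\<Sum>k<Suc N. b k * p ^ k)"
    by (simp only: sum.lessThan_Suc_shift) (simp add: b_def)
  also have "\<dots> = (\<Sum>k | b k \<noteq> 0. b k * p ^ k)"
    using N by (intro sum_below[symmetric]) (auto simp: b_def)
  finally show ?thesis .
qed

lemma Suc_image_pred:
  assumes "0 \<notin> S"
  shows "Suc ` (\<lambda>s. s - 1) ` S = S"
proof -
  have "Suc (s - 1) = s" if "s \<in> S" for s
    using assms that by (cases s) auto
  then show ?thesis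
    by (simp add: image_image cong: image_cong)
qed

lemma wt_phi_mono:
  assumes "m \<in> monoms n"
  shows "wt p m = p * (fst m 1 + wt p (phi_mono m))"
proof -
  obtain a S where m: "m = (a, S)" by (cases m)
  have a: "a 0 = 0" "finite {k. a k \<noteq> 0}" and S: "0 \<notin> S"
    using assms m by (auto simp: monoms_def)
  have "(\<Sum>s\<in>S. p ^ s) = (\<Sum>s\<in>Suc ` (\<lambda>s. s - 1) ` S. p ^ s)"
    using Suc_image_pred[OF S] by simp
  also have "\<dots> = p * (\<Sum>s\<in>(\<lambda>s. s - 1) ` S. p ^ s)"
    by (simp add: sum.reindex sum_distrib_left)
  finally have "(\<Sum>s\<in>S. p ^ s) = p * (\<Sum>s\<in>(\<lambda>s. s - 1) ` S. p ^ s)" .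
  then show ?thesis
    using weight_sum_shift[OF a, of p] m by (simp add: wt_def phi_mono_def algebra_simps)
qed

lemma p_dvd_wt:
  assumes "m \<in> monoms n"
  shows "p dvd wt p m"
  using wt_phi_mono[OF assms] by simp

lemma phi_mono_monoms:
  assumes "m \<in> monoms (Suc n)"
  shows "phi_mono m \<in> monoms n"
proof -
  obtain a S where m: "m = (a, S)" by (cases m)
  have "{k. (if k = 0 then 0 else a (Suc k)) \<noteq> 0} \<subseteq> (\<lambda>k. k - 1) ` {k. a k \<noteq> 0}"
    by (auto split: if_splits intro!: image_eqI[where x = "Suc _"])
  moreover have "finite {k. a k \<noteq> 0}"
    using assms m by (auto simp: monoms_def)
  ultimately have "finite {k. (if k = 0 then 0 else a (Suc k)) \<noteq> 0}"
    using finite_subset by blast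
  then show ?thesis
    using assms m unfolding monoms_def phi_mono_def
    by (simp only: mem_Collect_eq case_prod_conv fst_conv snd_conv) auto
qed

definition lift_mono :: "nat \<Rightarrow> monom \<Rightarrow> monom" where
  "lift_mono c m = ((\<lambda>k. if k = 0 then 0 else if k = 1 then c else fst m (k - 1)), Suc ` snd m)"

lemma lift_mono_monoms:
  assumes "m \<in> monoms n"
  shows "lift_mono c m \<in> monoms (Suc n)"
proof -
  obtain a S where m: "m = (a, S)" by (cases m)
  have "{k. (if k = 0 then 0 else if k = 1 then c else a (k - 1)) \<noteq> 0}
      \<subseteq> insert 1 (Suc ` {k. a k \<noteq> 0})"
    by (auto split: if_splits intro!: image_eqI[where x = "_ - 1"])
  moreover have "finite {k. a k \<noteq> 0}"
    using assms m by (auto simp: monoms_def)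
  ultimately have "finite {k. (if k = 0 then 0 else if k = 1 then c else a (k - 1)) \<noteq> 0}"
    using finite_subset by blast
  then show ?thesis
    using assms m unfolding monoms_def lift_mono_def
    by (simp only: mem_Collect_eq case_prod_conv fst_conv snd_conv) auto
qed

lemma phi_mono_lift_mono:
  assumes "fst m 0 = 0"
  shows "phi_mono (lift_mono c m) = m"
  using assms by (cases m) (auto simp: phi_mono_def lift_mono_def image_image)

lemma lift_mono_phi_mono:
  assumes "m \<in> monoms n"
  shows "lift_mono (fst m 1) (phi_mono m) = m"
proof -
  obtain a S where m: "m = (a, S)" by (cases m)
  have "a 0 = 0" and "0 \<notin> S"
    using assms m by (auto simp: monoms_def)
  moreover from \<open>0 \<notin> S\<close> have "Suc ` (\<lambda>s. s - 1) ` S = S"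
    by (rule Suc_image_pred)
  ultimately show ?thesis
    using m by (auto simp: lift_mono_def phi_mono_def fun_eq_iff nat.case_eq_if split: nat.split)
qed

lemma wt_lift_mono:
  assumes "m \<in> monoms n"
  shows "wt p (lift_mono c m) = p * (c + wt p m)"
proof -
  have "fst m 0 = 0"
    using assms by (auto simp: monoms_def)
  moreover have "fst (lift_mono c m) 1 = c"
    by (simp add: lift_mono_def)
  ultimately show ?thesis
    using wt_phi_mono[OF lift_mono_monoms[OF assms], of p] by (simp add: phi_mono_lift_mono)
qed

lemma bij_betw_phi_mono:
  assumes "0 < p"
  shows "bij_betw phi_mono {m \<in> monoms (Suc n). wt p m = p * j}
    {m \<in> monoms n. wt p m \<le> p * (j div p)}"
proof -
  have le_iff: "wt p m \<le> p * (j div p) \<longleftrightarrow> wt p m \<le> j" if m: "m \<in> monoms n" for m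
  proof -
    obtain q where "wt p m = p * q"
      using p_dvd_wt[OF m] by (rule dvdE)
    then show ?thesis
      using less_eq_div_iff_mult_less_eq[OF assms, of q j] assms by (simp add: mult.commute)
  qed
  have phi_mono_wt: "phi_mono m \<in> monoms n \<and> wt p (phi_mono m) \<le> p * (j div p)
      \<and> lift_mono (j - wt p (phi_mono m)) (phi_mono m) = m"
    if m: "m \<in> monoms (Suc n)" and wt_m: "wt p m = p * j" for m
  proof -
    have "j = fst m 1 + wt p (phi_mono m)"
      using wt_phi_mono[OF m, of p] wt_m assms by simp
    then show ?thesis
      using phi_mono_monoms[OF m] le_iff lift_mono_phi_mono[OF m] by auto
  qed
  have lift_mono_wt: "lift_mono (j - wt p m) m \<in> monoms (Suc n) \<and> wt p (lift_mono (j - wt p m) m) = p * j"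
    if m: "m \<in> monoms n" and wt_m: "wt p m \<le> p * (j div p)" for m
    using lift_mono_monoms[OF m] wt_lift_mono[OF m] le_iff[OF m] wt_m by simp
  have fst_zero: "fst m 0 = 0" if "m \<in> monoms n" for m
    using that by (auto simp: monoms_def)
  show ?thesis
  proof (rule bij_betw_byWitness[where f' = "\<lambda>m. lift_mono (j - wt p m) m"])
    show "\<forall>m\<in>{m \<in> monoms (Suc n). wt p m = p * j}. lift_mono (j - wt p (phi_mono m)) (phi_mono m) = m"
      using phi_mono_wt by blast
    show "\<forall>m\<in>{m \<in> monoms n. wt p m \<le> p * (j div p)}. phi_mono (lift_mono (j - wt p m) m) = m"
      using fst_zero phi_mono_lift_mono by blast
    show "phi_mono ` {m \<in> monoms (Suc n). wt p m = p * j} \<subseteq> {m \<in> monoms n. wt p m \<le> p * (j div p)}"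
      using phi_mono_wt by blast
    show "(\<lambda>m. lift_mono (j - wt p m) m) ` {m \<in> monoms n. wt p m \<le> p * (j div p)}
        \<subseteq> {m \<in> monoms (Suc n). wt p m = p * j}"
      using lift_mono_wt by blast
  qed
qed

lemma Msp_eq_finsupp_on: "Msp p i j = finsupp_on {m \<in> monoms i. wt p m = p * j}"
  by (auto simp: Msp_def AE_def finsupp_on_def)

lemma Nsp_eq_finsupp_on: "Nsp p n k = finsupp_on {m \<in> monoms n. wt p m \<le> p * k}"
  by (auto simp: Nsp_def AE_def finsupp_on_def)

theorem mainTheorem13:
  fixes p i j :: nat
  assumes "prime p" and "odd p"
    and "card (UNIV :: 'a::{field,finite} set) = p"
    and "1 \<le> i"
  shows "bij_betw (phi :: (monom \<Rightarrow> 'a) \<Rightarrow> _) (Msp p i j) (Nsp p (i - 1) (j div p))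
    \<and> (\<forall>u\<in>Msp p i j. \<forall>v\<in>Msp p i j. \<forall>c::'a.
          phi (\<lambda>m. u m + v m) = (\<lambda>m. phi u m + phi v m) \<and> phi (\<lambda>m. c * v m) = (\<lambda>m. c * phi v m))"
proof -
  obtain n where i: "i = Suc n"
    using assms(4) not0_implies_Suc by fastforce
  have bij: "bij_betw phi_mono {m \<in> monoms i. wt p m = p * j} {m \<in> monoms n. wt p m \<le> p * (j div p)}"
    unfolding i using bij_betw_phi_mono prime_gt_0_nat[OF assms(1)] by blast
  then have bij_phi: "bij_betw (phi :: (monom \<Rightarrow> 'a) \<Rightarrow> _) (Msp p i j) (Nsp p (i - 1) (j div p))"
    unfolding phi_eq_pushforward Msp_eq_finsupp_on Nsp_eq_finsupp_on
    using bij_betw_pushforward by (simp add: i)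
  have inj: "inj_on phi_mono {m \<in> monoms i. wt p m = p * j}"
    using bij by (rule bij_betw_imp_inj_on)
  have supp: "{m. v m \<noteq> 0} \<subseteq> {m \<in> monoms i. wt p m = p * j}" if "v \<in> Msp p i j" for v :: "monom \<Rightarrow> 'a"
    using that by (simp add: Msp_eq_finsupp_on finsupp_on_def)
  have phi_add: "phi (\<lambda>m. u m + v m) = (\<lambda>m. phi u m + phi v m)"
    if "u \<in> Msp p i j" and "v \<in> Msp p i j" for u v :: "monom \<Rightarrow> 'a"
    unfolding phi_eq_pushforward using inj supp[OF that(1)] supp[OF that(2)] by (rule pushforward_add)
  have phi_scale: "phi (\<lambda>m. c * v m) = (\<lambda>m. c * phi v m)" if "v \<in> Msp p i j" for v :: "monom \<Rightarrow> 'a" and c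
    unfolding phi_eq_pushforward using inj supp[OF that] by (rule pushforward_scale)
  show ?thesis
    using bij_phi phi_add phi_scale by (intro conjI ballI allI)
qed

end
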